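(* Let $f({\bf X})=\sum_{k=1}^{K}\alpha_k g_k({\bf X}^{\mathrm H}{\bf A}_k{\bf X})$ be a generalized quadratic matrix function on $\mathbb{C}^{n\times r}$ and ${\bf X}_0\in\mathbb{C}^{n\times r}$. Define $$\bar f({\bf X};{\bf X}_0)=\sum_{k:\alpha_k>0}\alpha_k\, l_k({\bf X};{\bf X}_0)+\sum_{k:\alpha_k<0}\alpha_k\, u_k({\bf X};{\bf X}_0),$$ where $l_k$ and $u_k$ are the lower and upper bound functions associated with $(g_k,{\bf A}_k,{\bf X}_0)$. Then $\bar f(\cdot;{\bf X}_0)$ is concave on $\mathbb{C}^{n\times r}$, $\bar f({\bf X};{\bf X}_0)\le f({\bf X})$ for all ${\bf X}$, $\bar f({\bf X}_0;{\bf X}_0)=f({\bf X}_0)$, and $\bar f(\cdot;{\bf X}_0)$ and $f$ have the same (real Fréchet) derivative at ${\bf X}_0$.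
   Context: $\mathbb{H}^m$: real vector space of $m\times m$ complex Hermitian matrices, inner product $\mathrm{tr}({\bf U}{\bf V})$; ${\bf U}\succeq{\bf V}$ means ${\bf U}-{\bf V}$ is positive semidefinite. For ${\bf A}\in\mathbb{H}^n$ with eigen-decomposition $\sum_i\lambda_i{\bf u}_i{\bf u}_i^{\mathrm H}$, ${\bf A}^{(+)}=\sum_{\lambda_i>0}\lambda_i{\bf u}_i{\bf u}_i^{\mathrm H}$, ${\bf A}^{(-)}=\sum_{\lambda_i<0}\lambda_i{\bf u}_i{\bf u}_i^{\mathrm H}$. $g:\mathbb{H}^r\to\mathbb{R}$ is MND if ${\bf W}_1\succeq{\bf W}_2\Rightarrow g({\bf W}_1)\ge g({\bf W}_2)$ and MNI if ${\bf W}_1\succeq{\bf W}_2\Rightarrow g({\bf W}_1)\le g({\bf W}_2)$; $\mathcal{G}$ is the family of differentiable convex $g:\mathbb{H}^r\to\mathbb{R}$ that are MND or MNI; $\nabla g({\bf W}_0)\in\mathbb{H}^r$ is the gradient w.r.t. $\mathrm{tr}({\bf U}{\bf V})$. A generalized quadratic matrix function is $f({\bf X})=\sum_{k=1}^K\alpha_k g_k({\bf X}^{\mathrm H}{\bf A}_k{\bf X})$ with $\alpha_k\in\mathbb{R}$, ${\bf A}_k\in\mathbb{H}^n$, $g_k\in\mathcal{G}$. For $(g,{\bf A},{\bf X}_0)$ with ${\bf W}_0={\bf X}_0^{\mathrm H}{\bf A}{\bf X}_0$, ${\bf G}=\nabla g({\bf W}_0)$: the lower bound function is $l({\bf X};{\bf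 X}_0)=\mathrm{tr}({\bf L}({\bf X}){\bf G})+g({\bf W}_0)-\mathrm{tr}({\bf W}_0{\bf G})$, where ${\bf L}({\bf X})={\bf X}^{\mathrm H}{\bf A}^{(-)}{\bf X}+{\bf X}^{\mathrm H}{\bf A}^{(+)}{\bf X}_0+{\bf X}_0^{\mathrm H}{\bf A}^{(+)}{\bf X}-{\bf X}_0^{\mathrm H}{\bf A}^{(+)}{\bf X}_0$ if $g$ is MND and ${\bf L}({\bf X})={\bf X}^{\mathrm H}{\bf A}^{(+)}{\bf X}+{\bf X}^{\mathrm H}{\bf A}^{(-)}{\bf X}_0+{\bf X}_0^{\mathrm H}{\bf A}^{(-)}{\bf X}-{\bf X}_0^{\mathrm H}{\bf A}^{(-)}{\bf X}_0$ if $g$ is MNI; the upper bound function is $u({\bf X};{\bf X}_0)=g\big({\bf X}^{\mathrm H}{\bf A}^{(+)}{\bf X}+{\bf X}^{\mathrm H}{\bf A}^{(-)}{\bf X}_0+{\bf X}_0^{\mathrm H}{\bf A}^{(-)}{\bf X}-{\bf X}_0^{\mathrm H}{\bf A}^{(-)}{\bf X}_0\big)$ if $g$ is MND and $u({\bf X};{\bf X}_0)=g\big({\bf X}^{\mathrm H}{\bf A}^{(-)}{\bf X}+{\bf X}^{\mathrm H}{\bf A}^{(+)}{\bf X}_0+{\bf X}_0^{\mathrm H}{\bf A}^{(+)}{\bf X}-{\bf X}_0^{\mathrm H}{\bf A}^{(+)}{\bf X}_0\big)$ if $g$ is MNI. *)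

theory Defs
  imports "HOL-Analysis.Analysis"
begin

text \<open>Complex matrices are rendered with HOL-Analysis finite-type-indexed vectors:
  an m x p complex matrix has type complex^'p^'m (rows indexed by 'm).
  The space is a real normed vector space, so real Frechet derivatives and
  convexity over the reals make sense.\<close>

definition cadj :: "complex^'p^'m \<Rightarrow> complex^'m^'p" where
  "cadj X = (\<chi> i j. cnj (X $ j $ i))"

definition hermitian :: "complex^'m^'m \<Rightarrow> bool" where
  "hermitian A \<longleftrightarrow> cadj A = A"

definition hermitian_set :: "(complex^'m^'m) set" where
  "hermitian_set = {A. hermitian A}"

definition psd :: "complex^'m^'m \<Rightarrow> bool" where
  "psd M \<longleftrightarrow> hermitian M \<and> (\<forall>x::complex^'m. 0 \<le> Re (\<Sum>i\<in>UNIV. cnj (x $ i) * (M *v x) $ i))"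

definition loewner_ge :: "complex^'m^'m \<Rightarrow> complex^'m^'m \<Rightarrow> bool" where
  "loewner_ge U V \<longleftrightarrow> psd (U - V)"

definition unitary :: "complex^'m^'m \<Rightarrow> bool" where
  "unitary U \<longleftrightarrow> U ** cadj U = mat 1 \<and> cadj U ** U = mat 1"

definition rdiag :: "real^'m \<Rightarrow> complex^'m^'m" where
  "rdiag d = (\<chi> i j. if i = j then complex_of_real (d $ i) else 0)"

definition pos_part :: "complex^'m^'m \<Rightarrow> complex^'m^'m" where
  "pos_part A = (SOME P. \<exists>U (lam::real^'m). unitary U \<and> A = U ** rdiag lam ** cadj U
      \<and> P = U ** rdiag (\<chi> i. if lam $ i > 0 then lam $ i else 0) ** cadj U)"

definition neg_part :: "complex^'m^'m \<Rightarrow> complex^'m^'m" where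
  "neg_part A = (SOME P. \<exists>U (lam::real^'m). unitary U \<and> A = U ** rdiag lam ** cadj U
      \<and> P = U ** rdiag (\<chi> i. if lam $ i < 0 then lam $ i else 0) ** cadj U)"

definition MND :: "(complex^'r^'r \<Rightarrow> real) \<Rightarrow> bool" where
  "MND g \<longleftrightarrow> (\<forall>W1 W2. hermitian W1 \<and> hermitian W2 \<and> loewner_ge W1 W2 \<longrightarrow> g W1 \<ge> g W2)"

definition MNI :: "(complex^'r^'r \<Rightarrow> real) \<Rightarrow> bool" where
  "MNI g \<longleftrightarrow> (\<forall>W1 W2. hermitian W1 \<and> hermitian W2 \<and> loewner_ge W1 W2 \<longrightarrow> g W1 \<le> g W2)"

text \<open>The family G: differentiable convex functions on the real vector space of
  Hermitian matrices that are MND or MNI (values off the Hermitian matrices are irrelevant).\<close>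
definition class_G :: "(complex^'r^'r \<Rightarrow> real) \<Rightarrow> bool" where
  "class_G g \<longleftrightarrow> convex_on hermitian_set g
     \<and> (\<forall>W\<in>hermitian_set. g differentiable (at W within hermitian_set))
     \<and> (MND g \<or> MNI g)"

definition herm_grad :: "(complex^'r^'r \<Rightarrow> real) \<Rightarrow> complex^'r^'r \<Rightarrow> complex^'r^'r" where
  "herm_grad g W0 = (SOME G. hermitian G \<and>
     (g has_derivative (\<lambda>V. Re (trace (V ** G)))) (at W0 within hermitian_set))"

definition lin_L :: "(complex^'r^'r \<Rightarrow> real) \<Rightarrow> complex^'n^'n \<Rightarrow> complex^'r^'n
     \<Rightarrow> complex^'r^'n \<Rightarrow> complex^'r^'r" where
  "lin_L g A X0 X = (if MND g then
       cadj X ** neg_part A ** X + cadj X ** pos_part A ** X0 + cadj X0 ** pos_part A ** X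
         - cadj X0 ** pos_part A ** X0
     else
       cadj X ** pos_part A ** X + cadj X ** neg_part A ** X0 + cadj X0 ** neg_part A ** X
         - cadj X0 ** neg_part A ** X0)"

definition lower_bnd :: "(complex^'r^'r \<Rightarrow> real) \<Rightarrow> complex^'n^'n \<Rightarrow> complex^'r^'n
     \<Rightarrow> complex^'r^'n \<Rightarrow> real" where
  "lower_bnd g A X0 X =
     (let W0 = cadj X0 ** A ** X0; G = herm_grad g W0
      in Re (trace (lin_L g A X0 X ** G)) + g W0 - Re (trace (W0 ** G)))"

definition upper_bnd :: "(complex^'r^'r \<Rightarrow> real) \<Rightarrow> complex^'n^'n \<Rightarrow> complex^'r^'n
     \<Rightarrow> complex^'r^'n \<Rightarrow> real" where
  "upper_bnd g A X0 X = (if MND g then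
       g (cadj X ** pos_part A ** X + cadj X ** neg_part A ** X0 + cadj X0 ** neg_part A ** X
          - cadj X0 ** neg_part A ** X0)
     else
       g (cadj X ** neg_part A ** X + cadj X ** pos_part A ** X0 + cadj X0 ** pos_part A ** X
          - cadj X0 ** pos_part A ** X0))"

definition gqmf :: "nat \<Rightarrow> (nat \<Rightarrow> real) \<Rightarrow> (nat \<Rightarrow> complex^'r^'r \<Rightarrow> real)
     \<Rightarrow> (nat \<Rightarrow> complex^'n^'n) \<Rightarrow> complex^'r^'n \<Rightarrow> real" where
  "gqmf K \<alpha> g A X = (\<Sum>k=1..K. \<alpha> k * g k (cadj X ** A k ** X))"

definition fbar :: "nat \<Rightarrow> (nat \<Rightarrow> real) \<Rightarrow> (nat \<Rightarrow> complex^'r^'r \<Rightarrow> real)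
     \<Rightarrow> (nat \<Rightarrow> complex^'n^'n) \<Rightarrow> complex^'r^'n \<Rightarrow> complex^'r^'n \<Rightarrow> real" where
  "fbar K \<alpha> g A X0 X =
     (\<Sum>k\<in>{k\<in>{1..K}. \<alpha> k > 0}. \<alpha> k * lower_bnd (g k) (A k) X0 X)
   + (\<Sum>k\<in>{k\<in>{1..K}. \<alpha> k < 0}. \<alpha> k * upper_bnd (g k) (A k) X0 X)"

end

theory Submission
  imports Defs
begin

text \<open>Each term \<open>\<alpha>\<^sub>k g\<^sub>k(X\<^sup>H A\<^sub>k X)\<close> is bounded separately. Writing \<open>A = A\<^sup>+ + A\<^sup>-\<close> and
  linearising one of the two parts at \<open>X\<^sub>0\<close> gives a matrix \<open>L(X)\<close> that differs from
  \<open>X\<^sup>H A X\<close> by the semidefinite congruence \<open>(X - X\<^sub>0)\<^sup>H A\<^sup>\<plusminus> (X - X\<^sub>0)\<close>; Loewner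
  monotonicity of \<open>g\<close> then compares \<open>g(L(X))\<close> with \<open>g(X\<^sup>H A X)\<close>. For the lower bound,
  convexity of \<open>g\<close> puts its tangent at \<open>W\<^sub>0 = X\<^sub>0\<^sup>H A X\<^sub>0\<close> below \<open>g(L(X))\<close>, and the
  quadratic part of \<open>L\<close> has the sign that makes the tangent concave in \<open>X\<close>; for the upper
  bound, \<open>g \<circ> L\<close> is convex because \<open>L\<close> is Loewner-convex when \<open>g\<close> is nondecreasing
  and Loewner-concave when \<open>g\<close> is nonincreasing. Both bounds agree with the term at \<open>X\<^sub>0\<close> and have the
  same derivative there, and these properties survive nonnegative combinations and sums.\<close>

section \<open>Conjugate transpose and Hermitian matrices\<close>

lemma cadj_nth [simp]: "cadj X $ i $ j = cnj (X $ j $ i)"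
  by (simp add: cadj_def)

lemma cadj_cadj [simp]: "cadj (cadj X) = X"
  by (simp add: vec_eq_iff)

lemma cadj_add: "cadj (X + Y) = cadj X + cadj Y"
  by (simp add: vec_eq_iff)

lemma cadj_diff: "cadj (X - Y) = cadj X - cadj Y"
  by (simp add: vec_eq_iff)

lemma cadj_scaleR: "cadj (c *\<^sub>R X) = c *\<^sub>R cadj X"
  by (simp add: vec_eq_iff)

lemma cadj_matrix_mult: "cadj (X ** Y) = cadj Y ** cadj X"
  by (simp add: vec_eq_iff matrix_matrix_mult_def mult.commute)

lemma matrix_add_rdistrib: "((B::'a::semiring_1^'n^'m) + C) ** A = B ** A + C ** A"
  by (simp add: vec_eq_iff matrix_matrix_mult_def sum.distrib algebra_simps)

lemma matrix_diff_ldistrib: "(A::'a::ring_1^'n^'m) ** (B - C) = A ** B - A ** C"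
  by (simp add: vec_eq_iff matrix_matrix_mult_def sum_subtractf algebra_simps)

lemma matrix_diff_rdistrib: "((B::'a::ring_1^'n^'m) - C) ** A = B ** A - C ** A"
  by (simp add: vec_eq_iff matrix_matrix_mult_def sum_subtractf algebra_simps)

lemma matrix_neg_ldistrib: "(A::'a::ring_1^'n^'m) ** (- B) = - (A ** B)"
  by (simp add: vec_eq_iff matrix_matrix_mult_def sum_negf)

lemma matrix_neg_rdistrib: "(- (B::'a::ring_1^'n^'m)) ** A = - (B ** A)"
  by (simp add: vec_eq_iff matrix_matrix_mult_def sum_negf)

lemma hermitian_set_iff [simp]: "W \<in> hermitian_set \<longleftrightarrow> hermitian W"
  by (simp add: hermitian_set_def)

lemma hermitian_add: "hermitian A \<Longrightarrow> hermitian B \<Longrightarrow> hermitian (A + B)"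
  by (simp add: hermitian_def cadj_add)

lemma hermitian_diff: "hermitian A \<Longrightarrow> hermitian B \<Longrightarrow> hermitian (A - B)"
  by (simp add: hermitian_def cadj_diff)

lemma hermitian_scaleR: "hermitian A \<Longrightarrow> hermitian (c *\<^sub>R A)"
  by (simp add: hermitian_def cadj_scaleR)

lemma hermitian_congruence: "hermitian B \<Longrightarrow> hermitian (cadj X ** B ** X)"
  by (simp add: hermitian_def cadj_matrix_mult matrix_mul_assoc)

lemma hermitian_congruence_sym:
  "hermitian B \<Longrightarrow> hermitian (cadj X ** B ** Y + cadj Y ** B ** X)"
  by (simp add: hermitian_def cadj_matrix_mult cadj_add matrix_mul_assoc add.commute)

section \<open>The spectral theorem for Hermitian matrices\<close>

definition cinner :: "complex^'n \<Rightarrow> complex^'n \<Rightarrow> complex" where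
  "cinner x y = (\<Sum>i\<in>UNIV. cnj (x $ i) * y $ i)"

lemma cinner_zero_right [simp]: "cinner x 0 = 0"
  by (simp add: cinner_def)

lemma cinner_add_left: "cinner (x + y) z = cinner x z + cinner y z"
  by (simp add: cinner_def algebra_simps sum.distrib)

lemma cinner_add_right: "cinner x (y + z) = cinner x y + cinner x z"
  by (simp add: cinner_def algebra_simps sum.distrib)

lemma cinner_diff_right: "cinner x (y - z) = cinner x y - cinner x z"
  by (simp add: cinner_def algebra_simps sum_subtractf)

lemma cinner_scaleR_left: "cinner (c *\<^sub>R x) y = c *\<^sub>R cinner x y"
  by (simp add: cinner_def sum_distrib_left)
    (simp add: scaleR_conv_of_real algebra_simps sum_distrib_left)

lemma cinner_scaleR_right: "cinner x (c *\<^sub>R y) = c *\<^sub>R cinner x y"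
  by (simp add: cinner_def sum_distrib_left)
    (simp add: scaleR_conv_of_real algebra_simps sum_distrib_left)

lemma cinner_smult_right: "cinner x (c *s y) = c * cinner x y"
  by (simp add: cinner_def sum_distrib_left algebra_simps)

lemma cinner_sum_right: "finite S \<Longrightarrow> cinner x (sum f S) = (\<Sum>s\<in>S. cinner x (f s))"
  by (induction S rule: finite_induct) (auto simp: cinner_def distrib_left sum.distrib)

lemma cinner_commute: "cinner y x = cnj (cinner x y)"
  by (simp add: cinner_def mult.commute)

lemma cinner_self: "cinner x x = complex_of_real ((norm x)\<^sup>2)"
proof -
  have "(norm x)\<^sup>2 = (\<Sum>i\<in>UNIV. (norm (x $ i))\<^sup>2)"
    by (simp add: norm_vec_def L2_set_def sum_nonneg)
  then show ?thesis
    by (simp add: cinner_def complex_norm_square mult.commute del: of_real_power)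
qed

lemma norm_power2_cinner: "(norm x)\<^sup>2 = Re (cinner x x)"
  by (simp add: cinner_self)

lemma cinner_matrix_vector_mult: "cinner x (M *v y) = cinner (cadj M *v x) y"
  by (simp add: cinner_def matrix_vector_mult_def sum_distrib_left sum_distrib_right
      algebra_simps) (rule sum.swap)

lemma cinner_hermitian: "hermitian A \<Longrightarrow> cinner (A *v x) y = cinner x (A *v y)"
  by (simp add: cinner_matrix_vector_mult hermitian_def)

lemma matrix_vector_mult_scaleR: "(A::complex^'n^'m) *v (c *\<^sub>R x) = c *\<^sub>R (A *v x)"
  by (simp add: vec_eq_iff matrix_vector_mult_def scaleR_sum_right)

definition orthonormal :: "(complex^'n) set \<Rightarrow> bool" where
  "orthonormal S \<longleftrightarrow> (\<forall>s\<in>S. \<forall>t\<in>S. cinner s t = (if s = t then 1 else 0))"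

text \<open>A complex vector is a real combination of itself and its multiple by \<open>\<i>\<close>, so the
  complex span of \<open>S\<close> lies in the real span of \<open>S \<union> \<i>S\<close>, of real dimension \<open>\<le> 2 card S\<close>.\<close>
lemma exists_orthogonal_nonzero:
  fixes S :: "(complex^'n) set"
  assumes fin: "finite S" and card: "card S < CARD('n)" and on: "orthonormal S"
  shows "\<exists>v. v \<noteq> 0 \<and> (\<forall>s\<in>S. cinner s v = 0)"
proof -
  let ?T = "S \<union> (\<lambda>s. \<i> *s s) ` S"
  have "card ?T \<le> card S + card ((\<lambda>s. \<i> *s s) ` S)" by (rule card_Un_le)
  also have "\<dots> \<le> 2 * card S" using card_image_le[OF fin, of "\<lambda>s. \<i> *s s"] by simp
  finally have card_T: "card ?T < DIM(complex^'n)" using card by simp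
  obtain y where y: "y \<notin> span ?T"
    using dim_le_card[of UNIV ?T] fin card_T by (auto simp: not_le)
  define v where "v = y - (\<Sum>s\<in>S. cinner s y *s s)"
  have orth: "cinner t v = 0" if t: "t \<in> S" for t
  proof -
    have "cinner t (\<Sum>s\<in>S. cinner s y *s s) = (\<Sum>s\<in>S. cinner s y * cinner t s)"
      using fin by (simp add: cinner_sum_right cinner_smult_right)
    also have "\<dots> = (\<Sum>s\<in>S. if t = s then cinner s y else 0)"
      using on t unfolding orthonormal_def by (intro sum.cong) auto
    also have "\<dots> = cinner t y" using fin t by simp
    finally show ?thesis by (simp add: v_def cinner_diff_right)
  qed
  have "(\<Sum>s\<in>S. cinner s y *s s) \<in> span ?T"
  proof (rule span_sum)
    fix s assume "s \<in> S"
    have "c *s s = Re c *\<^sub>R s + Im c *\<^sub>R (\<i> *s s)" for c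
      by (simp add: vec_eq_iff complex_eq_iff)
    then show "cinner s y *s s \<in> span ?T"
      by (metis span_add span_scale span_base \<open>s \<in> S\<close> UnI1 UnI2 imageI)
  qed
  then have "v \<noteq> 0" using y by (auto simp: v_def)
  with orth show ?thesis by blast
qed

lemma quadratic_le_0_imp_linear_coeff_0:
  fixes a c :: real
  assumes "\<forall>t. 2 * t * a + t\<^sup>2 * c \<le> 0"
  shows "a = 0"
proof -
  have no_pos: False if pos: "b > 0" and le: "\<forall>t. 2 * t * b + t\<^sup>2 * c \<le> 0" for b
  proof -
    define t where "t = b / (\<bar>c\<bar> + 1)"
    have t: "t > 0" using pos by (simp add: t_def)
    have "t * \<bar>c\<bar> < b" using pos by (simp add: t_def field_simps)
    then have "t\<^sup>2 * \<bar>c\<bar> < t * b" using t by (simp add: power2_eq_square mult.assoc)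
    moreover have "t\<^sup>2 * (- \<bar>c\<bar>) \<le> t\<^sup>2 * c" by (rule mult_left_mono) auto
    moreover have "t * b > 0" using t pos by simp
    ultimately have "2 * t * b + t\<^sup>2 * c > 0" by linarith
    with le show False by (meson not_le)
  qed
  have "2 * t * (- a) + t\<^sup>2 * c \<le> 0" for t
    using assms[rule_format, of "- t"] by simp
  then show ?thesis
    using no_pos[of a] no_pos[of "- a"] assms by force
qed

text \<open>The Rayleigh quotient argument: a maximiser of \<open>x\<^sup>H A x\<close> on the unit sphere of an
  \<open>A\<close>-invariant subspace is an eigenvector, because perturbing it within the subspace in the
  direction of the residual \<open>A x - \<lambda> x\<close> would increase the quotient.\<close>
lemma rayleigh_maximiser_eigenvector:
  fixes A :: "complex^'n^'n"
  assumes herm: "hermitian A" and V: "subspace V" and inv: "\<And>v. v \<in> V \<Longrightarrow> A *v v \<in> V"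
    and x: "x \<in> V" "norm x = 1"
    and max: "\<And>y. y \<in> V \<Longrightarrow> Re (cinner y (A *v y)) \<le> Re (cinner x (A *v x)) * (norm y)\<^sup>2"
  shows "A *v x = Re (cinner x (A *v x)) *\<^sub>R x"
proof -
  define q where "q y = Re (cinner y (A *v y))" for y
  define lam where "lam = q x"
  define w where "w = A *v x - lam *\<^sub>R x"
  have "w \<in> V" using V inv x by (simp add: w_def subspace_diff subspace_scale)
  then have line: "x + t *\<^sub>R w \<in> V" for t using V x by (simp add: subspace_add subspace_scale)
  have sym_Aw: "Re (cinner x (A *v w)) = Re (cinner w (A *v x))"
    by (metis cinner_commute cinner_hermitian[OF herm] cnj.sel(1))
  have sym_w: "Re (cinner x w) = Re (cinner w x)" by (metis cinner_commute cnj.sel(1))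
  have Aw_x: "Re (cinner w (A *v x)) = (norm w)\<^sup>2 + lam * Re (cinner w x)"
    by (simp add: w_def cinner_diff_right cinner_scaleR_right norm_power2_cinner)
  have "2 * t * (norm w)\<^sup>2 + t\<^sup>2 * (q w - lam * (norm w)\<^sup>2) \<le> 0" for t
  proof -
    have "cinner (x + t *\<^sub>R w) (A *v (x + t *\<^sub>R w)) = cinner x (A *v x)
        + t *\<^sub>R cinner x (A *v w) + (t *\<^sub>R cinner w (A *v x) + (t * t) *\<^sub>R cinner w (A *v w))"
      by (simp add: matrix_vector_right_distrib matrix_vector_mult_scaleR cinner_add_left
          cinner_add_right cinner_scaleR_left cinner_scaleR_right add.assoc scaleR_add_right)
    then have q_line: "q (x + t *\<^sub>R w) = lam + 2 * t * Re (cinner w (A *v x)) + t\<^sup>2 * q w"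
      using sym_Aw by (simp add: q_def lam_def power2_eq_square)
    have "(norm (x + t *\<^sub>R w))\<^sup>2 = Re (cinner (x + t *\<^sub>R w) (x + t *\<^sub>R w))"
      by (rule norm_power2_cinner)
    also have "cinner (x + t *\<^sub>R w) (x + t *\<^sub>R w) = cinner x x + t *\<^sub>R cinner x w
        + (t *\<^sub>R cinner w x + (t * t) *\<^sub>R cinner w w)"
      by (simp add: cinner_add_left cinner_add_right cinner_scaleR_left cinner_scaleR_right
          add.assoc scaleR_add_right)
    finally have norm_line:
        "(norm (x + t *\<^sub>R w))\<^sup>2 = 1 + 2 * t * Re (cinner w x) + t\<^sup>2 * (norm w)\<^sup>2"
      using sym_w x(2) by (simp add: cinner_self power2_eq_square)
    have "q (x + t *\<^sub>R w) \<le> lam * (norm (x + t *\<^sub>R w))\<^sup>2"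
      using max[OF line] by (simp add: q_def lam_def)
    then show ?thesis unfolding q_line norm_line Aw_x by (simp add: algebra_simps)
  qed
  then have "(norm w)\<^sup>2 = 0" by (intro quadratic_le_0_imp_linear_coeff_0) auto
  then show ?thesis by (simp add: w_def lam_def q_def)
qed

lemma exists_rayleigh_maximiser:
  fixes A :: "complex^'n^'n"
  assumes V: "subspace V" and "v \<in> V" and "v \<noteq> 0"
  shows "\<exists>x\<in>V. norm x = 1
    \<and> (\<forall>y\<in>V. Re (cinner y (A *v y)) \<le> Re (cinner x (A *v x)) * (norm y)\<^sup>2)"
proof -
  define q where "q x = Re (cinner x (A *v x))" for x
  have compact: "compact (sphere 0 1 \<inter> V)"
    using closed_subspace[OF V] by (intro compact_Int_closed compact_sphere)
  have "(1 / norm v) *\<^sub>R v \<in> sphere 0 1 \<inter> V" using assms by (simp add: subspace_scale)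
  moreover have "continuous_on (sphere 0 1 \<inter> V) q"
    unfolding q_def cinner_def matrix_vector_mult_def by (intro continuous_intros)
  ultimately obtain x where x: "x \<in> sphere 0 1 \<inter> V" and x_max: "\<forall>y\<in>sphere 0 1 \<inter> V. q y \<le> q x"
    using continuous_attains_sup[OF compact] by blast
  have "q y \<le> q x * (norm y)\<^sup>2" if y: "y \<in> V" for y
  proof (cases "y = 0")
    case True then show ?thesis by (simp add: q_def)
  next
    case False
    have "q ((1 / norm y) *\<^sub>R y) \<le> q x" using x_max y False V by (simp add: subspace_scale)
    then have "(1 / norm y)\<^sup>2 * q y \<le> q x"
      by (simp add: q_def matrix_vector_mult_scaleR cinner_scaleR_left cinner_scaleR_right
          power2_eq_square)
    then show ?thesis using False by (simp add: field_simps power2_eq_square)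
  qed
  with x show ?thesis by (auto simp: q_def)
qed

lemma exists_eigenvector_orthogonal:
  fixes S :: "(complex^'n) set" and A :: "complex^'n^'n"
  assumes herm: "hermitian A" and fin: "finite S" and card: "card S < CARD('n)"
    and on: "orthonormal S" and eig: "\<forall>s\<in>S. \<exists>\<mu>::real. A *v s = \<mu> *\<^sub>R s"
  shows "\<exists>x. cinner x x = 1 \<and> (\<forall>s\<in>S. cinner s x = 0) \<and> (\<exists>\<mu>::real. A *v x = \<mu> *\<^sub>R x)"
proof -
  define V where "V = {x. \<forall>s\<in>S. cinner s x = 0}"
  have V: "subspace V"
    by (auto simp: subspace_def V_def cinner_add_right cinner_scaleR_right)
  have inv: "A *v v \<in> V" if "v \<in> V" for v
  proof -
    have "cinner s (A *v v) = 0" if s: "s \<in> S" for s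
    proof -
      obtain \<mu> :: real where "A *v s = \<mu> *\<^sub>R s" using eig s by blast
      then show ?thesis using cinner_hermitian[OF herm, of s v] \<open>v \<in> V\<close> s
        by (simp add: V_def cinner_scaleR_left)
    qed
    then show ?thesis by (simp add: V_def)
  qed
  obtain v where "v \<noteq> 0" "v \<in> V" using exists_orthogonal_nonzero[OF fin card on]
    by (auto simp: V_def)
  then obtain x where x: "x \<in> V" "norm x = 1"
    and max: "\<forall>y\<in>V. Re (cinner y (A *v y)) \<le> Re (cinner x (A *v x)) * (norm y)\<^sup>2"
    using exists_rayleigh_maximiser[OF V] by blast
  have "A *v x = Re (cinner x (A *v x)) *\<^sub>R x"
    using rayleigh_maximiser_eigenvector[OF herm V inv x] max by simp
  moreover have "cinner x x = 1" using x by (simp add: cinner_self)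
  ultimately show ?thesis using x by (auto simp: V_def)
qed

lemma exists_orthonormal_eigenvectors:
  fixes A :: "complex^'n^'n"
  assumes herm: "hermitian A" and "m \<le> CARD('n)"
  shows "\<exists>S. finite S \<and> card S = m \<and> orthonormal S \<and> (\<forall>s\<in>S. \<exists>\<mu>::real. A *v s = \<mu> *\<^sub>R s)"
  using assms(2)
proof (induction m)
  case 0
  show ?case by (rule exI[of _ "{}"]) (simp add: orthonormal_def)
next
  case (Suc m)
  then obtain S where S: "finite S" "card S = m" "orthonormal S"
    "\<forall>s\<in>S. \<exists>\<mu>::real. A *v s = \<mu> *\<^sub>R s" by auto
  obtain x where x: "cinner x x = 1" "\<forall>s\<in>S. cinner s x = 0" "\<exists>\<mu>::real. A *v x = \<mu> *\<^sub>R x"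
    using exists_eigenvector_orthogonal[OF herm S(1) _ S(3,4)] Suc.prems S(2) by auto
  have "x \<notin> S" using x(1,2) by force
  moreover have "orthonormal (insert x S)"
    unfolding orthonormal_def
  proof (intro ballI)
    fix s t assume "s \<in> insert x S" "t \<in> insert x S"
    then show "cinner s t = (if s = t then 1 else 0)"
      using S(3) x \<open>x \<notin> S\<close> cinner_commute[of x t] unfolding orthonormal_def by auto
  qed
  ultimately show ?case using S x by (intro exI[of _ "insert x S"]) auto
qed

lemma matrix_mult_rdiag:
  "((M::complex^'n^'m) ** rdiag d) $ i $ j = M $ i $ j * complex_of_real (d $ j)"
  by (simp add: matrix_matrix_mult_def rdiag_def if_distrib cong: if_cong)

lemma rdiag_matrix_mult:
  "(rdiag d ** (M::complex^'m^'n)) $ i $ j = complex_of_real (d $ i) * M $ i $ j"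
proof -
  have "(if i = k then complex_of_real (d $ i) else 0) * M $ k $ j
     = (if i = k then complex_of_real (d $ i) * M $ k $ j else 0)" for k by simp
  then show ?thesis unfolding matrix_matrix_mult_def rdiag_def by simp
qed

theorem hermitian_unitary_diagonalisation:
  fixes A :: "complex^'n^'n"
  assumes herm: "hermitian A"
  shows "\<exists>U lam. unitary U \<and> A = U ** rdiag lam ** cadj U"
proof -
  obtain S where S: "finite S" "card S = CARD('n)" "orthonormal S"
    "\<forall>s\<in>S. \<exists>\<mu>::real. A *v s = \<mu> *\<^sub>R s"
    using exists_orthonormal_eigenvectors[OF herm, of "CARD('n)"] by auto
  obtain f where f: "bij_betw f (UNIV::'n set) S"
    using finite_same_card_bij[of "UNIV::'n set" S] S by auto
  define U :: "complex^'n^'n" where "U = (\<chi> i j. f j $ i)"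
  define lam :: "real^'n" where "lam = (\<chi> j. SOME \<mu>. A *v f j = \<mu> *\<^sub>R f j)"
  have fS: "f j \<in> S" for j using f by (auto simp: bij_betw_def)
  have "f i = f j \<longleftrightarrow> i = j" for i j using f by (auto simp: bij_betw_def inj_on_def)
  then have "(cadj U ** U) $ i $ j = (if i = j then 1 else 0)" for i j
    using S(3) fS unfolding orthonormal_def by (auto simp: matrix_matrix_mult_def U_def cinner_def)
  then have UU: "cadj U ** U = mat 1" by (simp add: vec_eq_iff mat_def)
  then have UU': "U ** cadj U = mat 1" using matrix_left_right_inverse by blast
  have eig: "A *v f j = (lam $ j) *\<^sub>R f j" for j
    unfolding lam_def using someI_ex[of "\<lambda>\<mu>. A *v f j = \<mu> *\<^sub>R f j"] S(4) fS by auto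
  have "(A ** U) $ i $ j = (A *v f j) $ i" for i j
    by (simp add: matrix_matrix_mult_def matrix_vector_mult_def U_def)
  then have AU: "A ** U = U ** rdiag lam"
    by (simp add: vec_eq_iff eig matrix_mult_rdiag U_def)
      (simp add: scaleR_conv_of_real mult.commute)
  have "A = A ** (U ** cadj U)" by (simp add: UU')
  also have "\<dots> = U ** rdiag lam ** cadj U" by (simp add: matrix_mul_assoc AU)
  finally show ?thesis using UU UU' unfolding unitary_def by blast
qed

section \<open>Positive and negative parts\<close>

text \<open>The functional calculus \<open>\<phi>(A) = U \<phi>(\<Lambda>) U\<^sup>H\<close> does not depend on the chosen
  diagonalisation: \<open>V\<^sup>H U\<close> intertwines the two diagonal matrices, hence only connects
  equal eigenvalues.\<close>
lemma unitary_diag_fun_eq: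
  fixes U V :: "complex^'n^'n"
  assumes U: "unitary U" and V: "unitary V"
    and eq: "U ** rdiag d ** cadj U = V ** rdiag e ** cadj V"
  shows "U ** rdiag (\<chi> i. \<phi> (d $ i)) ** cadj U = V ** rdiag (\<chi> i. \<phi> (e $ i)) ** cadj V"
proof -
  have U1: "U ** cadj U = mat 1" "cadj U ** U = mat 1" using U by (auto simp: unitary_def)
  have V1: "V ** cadj V = mat 1" "cadj V ** V = mat 1" using V by (auto simp: unitary_def)
  define W where "W = cadj V ** U"
  have "cadj V ** (U ** rdiag d ** cadj U) ** U = cadj V ** (V ** rdiag e ** cadj V) ** U"
    by (simp add: eq)
  moreover have "X ** cadj U ** U = X" for X :: "complex^'n^'n"
    by (metis U1(2) matrix_mul_assoc matrix_mul_rid)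
  ultimately have WD: "W ** rdiag d = rdiag e ** W"
    by (simp add: matrix_mul_assoc V1 W_def)
  have "W $ i $ j * complex_of_real (d $ j) = complex_of_real (e $ i) * W $ i $ j" for i j
    using arg_cong[OF WD, of "\<lambda>M. M $ i $ j"] by (simp add: matrix_mult_rdiag rdiag_matrix_mult)
  then have connects: "W $ i $ j = 0 \<or> d $ j = e $ i" for i j by (auto simp: mult.commute)
  have "W $ i $ j * complex_of_real (\<phi> (d $ j)) = complex_of_real (\<phi> (e $ i)) * W $ i $ j"
    for i j using connects[of i j] by (auto simp: mult.commute)
  then have WP: "W ** rdiag (\<chi> i. \<phi> (d $ i)) = rdiag (\<chi> i. \<phi> (e $ i)) ** W"
    by (simp add: vec_eq_iff matrix_mult_rdiag rdiag_matrix_mult)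
  have "U ** rdiag (\<chi> i. \<phi> (d $ i)) ** cadj U
      = (V ** cadj V) ** U ** rdiag (\<chi> i. \<phi> (d $ i)) ** cadj U"
    by (simp add: V1)
  also have "\<dots> = V ** (W ** rdiag (\<chi> i. \<phi> (d $ i))) ** cadj U"
    by (simp add: W_def matrix_mul_assoc)
  also have "\<dots> = V ** rdiag (\<chi> i. \<phi> (e $ i)) ** (W ** cadj U)"
    by (simp add: WP matrix_mul_assoc)
  also have "\<dots> = V ** rdiag (\<chi> i. \<phi> (e $ i)) ** cadj V"
    by (simp add: W_def matrix_mul_assoc[symmetric] U1)
  finally show ?thesis .
qed

lemma some_unitary_diag_fun_eq:
  assumes U: "unitary U" and A: "A = U ** rdiag lam ** cadj U"
  shows "(SOME P. \<exists>U lam. unitary U \<and> A = U ** rdiag lam ** cadj U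
            \<and> P = U ** rdiag (\<chi> i. \<phi> (lam $ i)) ** cadj U)
         = U ** rdiag (\<chi> i. \<phi> (lam $ i)) ** cadj U"
  (is "Eps ?Q = _")
proof -
  have "?Q (Eps ?Q)" by (rule someI) (use U A in blast)
  then obtain U' lam' where "unitary U'" "A = U' ** rdiag lam' ** cadj U'"
    "Eps ?Q = U' ** rdiag (\<chi> i. \<phi> (lam' $ i)) ** cadj U'" by blast
  then show ?thesis using unitary_diag_fun_eq[OF _ U, of U' lam' lam \<phi>] A by simp
qed

lemma pos_part_eq:
  assumes "unitary U" and "A = U ** rdiag lam ** cadj U"
  shows "pos_part A = U ** rdiag (\<chi> i. if lam $ i > 0 then lam $ i else 0) ** cadj U"
  using some_unitary_diag_fun_eq[OF assms, of "\<lambda>x. if x > 0 then x else 0"]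
  by (simp add: pos_part_def)

lemma neg_part_eq:
  assumes "unitary U" and "A = U ** rdiag lam ** cadj U"
  shows "neg_part A = U ** rdiag (\<chi> i. if lam $ i < 0 then lam $ i else 0) ** cadj U"
  using some_unitary_diag_fun_eq[OF assms, of "\<lambda>x. if x < 0 then x else 0"]
  by (simp add: neg_part_def)

lemma cadj_rdiag [simp]: "cadj (rdiag d) = rdiag d"
  by (simp add: vec_eq_iff rdiag_def)

lemma hermitian_unitary_diag: "hermitian (U ** rdiag d ** cadj U)"
  by (simp add: hermitian_def cadj_matrix_mult matrix_mul_assoc)

lemma psd_cinner: "psd M \<longleftrightarrow> hermitian M \<and> (\<forall>x. 0 \<le> Re (cinner x (M *v x)))"
  by (simp add: psd_def cinner_def)

lemma psd_unitary_diag: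
  assumes "\<And>i. d $ i \<ge> 0"
  shows "psd (U ** rdiag d ** cadj U)"
proof -
  have "0 \<le> Re (cinner x ((U ** rdiag d ** cadj U) *v x))" for x
  proof -
    define y where "y = cadj U *v x"
    have "(rdiag d *v y) $ i = complex_of_real (d $ i) * y $ i" for i
    proof -
      have "(if i = k then complex_of_real (d $ i) else 0) * y $ k
         = (if i = k then complex_of_real (d $ i) * y $ k else 0)" for k by simp
      then show ?thesis unfolding matrix_vector_mult_def rdiag_def by simp
    qed
    then have "cinner y (rdiag d *v y) = (\<Sum>i\<in>UNIV. complex_of_real (d $ i * (cmod (y $ i))\<^sup>2))"
      unfolding cinner_def
      by (intro sum.cong refl) (simp add: complex_norm_square algebra_simps del: of_real_power)
    moreover have "cinner x ((U ** rdiag d ** cadj U) *v x) = cinner y (rdiag d *v y)"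
      by (simp add: matrix_vector_mul_assoc[symmetric] cinner_matrix_vector_mult y_def)
    ultimately show ?thesis using assms by (simp add: sum_nonneg)
  qed
  then show ?thesis by (simp add: psd_cinner hermitian_unitary_diag)
qed

lemma rdiag_add: "rdiag a + rdiag b = rdiag (a + b)"
  by (simp add: vec_eq_iff rdiag_def)

lemma rdiag_uminus: "- rdiag a = rdiag (- a)"
  by (simp add: vec_eq_iff rdiag_def)

lemma pos_part_add_neg_part:
  assumes "hermitian A"
  shows "pos_part A + neg_part A = A"
proof -
  obtain U lam where U: "unitary U" and A: "A = U ** rdiag lam ** cadj U"
    using hermitian_unitary_diagonalisation[OF assms] by blast
  have "(\<chi> i. if lam $ i > 0 then lam $ i else 0) + (\<chi> i. if lam $ i < 0 then lam $ i else 0) = lam"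
    by (simp add: vec_eq_iff)
  then show ?thesis
    unfolding pos_part_eq[OF U A] neg_part_eq[OF U A]
    by (simp add: matrix_add_ldistrib[symmetric] matrix_add_rdistrib[symmetric] rdiag_add A)
qed

lemma psd_pos_part:
  assumes "hermitian A"
  shows "psd (pos_part A)"
proof -
  obtain U lam where U: "unitary U" and A: "A = U ** rdiag lam ** cadj U"
    using hermitian_unitary_diagonalisation[OF assms] by blast
  show ?thesis unfolding pos_part_eq[OF U A] by (rule psd_unitary_diag) simp
qed

lemma psd_uminus_neg_part:
  assumes "hermitian A"
  shows "psd (- neg_part A)"
proof -
  obtain U lam where U: "unitary U" and A: "A = U ** rdiag lam ** cadj U"
    using hermitian_unitary_diagonalisation[OF assms] by blast
  have "- neg_part A = U ** rdiag (- (\<chi> i. if lam $ i < 0 then lam $ i else 0)) ** cadj U"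
    unfolding neg_part_eq[OF U A]
      by (simp add: rdiag_uminus[symmetric] matrix_neg_ldistrib matrix_neg_rdistrib)
  then show ?thesis by (simp add: psd_unitary_diag)
qed

lemma hermitian_pos_part: "hermitian A \<Longrightarrow> hermitian (pos_part A)"
  using psd_def psd_pos_part by blast

lemma hermitian_neg_part:
  assumes "hermitian A"
  shows "hermitian (neg_part A)"
proof -
  have "neg_part A = A - pos_part A" using pos_part_add_neg_part[OF assms]
    by (simp add: algebra_simps)
  then show ?thesis using assms by (simp add: hermitian_diff hermitian_pos_part)
qed

lemma matrix_scaleR_vector_mult: "((c::real) *\<^sub>R (P::complex^'n^'m)) *v x = c *\<^sub>R (P *v x)"
  by (simp add: vec_eq_iff matrix_vector_mult_def scaleR_sum_right)

lemma psd_scaleR: "c \<ge> 0 \<Longrightarrow> psd P \<Longrightarrow> psd (c *\<^sub>R P)"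
  unfolding psd_cinner by (simp add: hermitian_scaleR matrix_scaleR_vector_mult cinner_scaleR_right)

lemma psd_congruence:
  assumes "psd P"
  shows "psd (cadj Y ** P ** Y)"
proof -
  have "cinner x ((cadj Y ** P ** Y) *v x) = cinner (Y *v x) (P *v (Y *v x))" for x
    by (simp add: matrix_vector_mul_assoc[symmetric] cinner_matrix_vector_mult)
  then show ?thesis using assms by (simp add: psd_cinner hermitian_congruence)
qed

lemma psd_uminus_congruence: "psd (- N) \<Longrightarrow> psd (- (cadj Y ** N ** Y))"
  using psd_congruence[of "- N" Y] by (simp add: matrix_neg_ldistrib matrix_neg_rdistrib)

section \<open>Gradients on the Hermitian matrices\<close>

definition trace_pairing :: "complex^'r^'r \<Rightarrow> complex^'r^'r \<Rightarrow> real" where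
  "trace_pairing G M = Re (trace (M ** G))"

lemma trace_scaleR: "trace (c *\<^sub>R (M::complex^'n^'n)) = c *\<^sub>R trace M"
  by (simp add: trace_def scaleR_sum_right)

lemma trace_pairing_add: "trace_pairing G (M + N) = trace_pairing G M + trace_pairing G N"
  by (simp add: trace_pairing_def matrix_add_rdistrib trace_add)

lemma trace_pairing_diff: "trace_pairing G (M - N) = trace_pairing G M - trace_pairing G N"
  by (simp add: trace_pairing_def matrix_diff_rdistrib trace_sub)

lemma trace_pairing_scaleR: "trace_pairing G (c *\<^sub>R M) = c * trace_pairing G M"
  by (simp add: trace_pairing_def scalar_matrix_assoc[symmetric] trace_scaleR)

lemma trace_pairing_uminus: "trace_pairing G (- M) = - trace_pairing G M"
  by (simp add: trace_pairing_def matrix_neg_rdistrib trace_def sum_negf)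

lemma trace_pairing_scaleR_left: "trace_pairing (c *\<^sub>R G) M = c * trace_pairing G M"
  by (simp add: trace_pairing_def matrix_scalar_ac scalar_matrix_assoc[symmetric] trace_scaleR)

lemma trace_pairing_add_left: "trace_pairing (G + H) M = trace_pairing G M + trace_pairing H M"
  by (simp add: trace_pairing_def matrix_add_ldistrib trace_add)

lemma linear_trace_pairing: "linear (trace_pairing G)"
  by (rule linearI) (simp_all add: trace_pairing_add trace_pairing_scaleR)

lemma bounded_linear_trace_pairing: "bounded_linear (trace_pairing G)"
  using linear_trace_pairing linear_conv_bounded_linear by blast

lemma trace_cadj: "trace (cadj M) = cnj (trace M)"
  by (simp add: trace_def)

lemma trace_pairing_cadj:
  assumes "hermitian V"
  shows "trace_pairing (cadj G) V = trace_pairing G V"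
proof -
  have "V ** cadj G = cadj (G ** V)" using assms by (simp add: cadj_matrix_mult hermitian_def)
  then have "trace (V ** cadj G) = cnj (trace (G ** V))" by (simp add: trace_cadj)
  also have "\<dots> = cnj (trace (V ** G))" using trace_mul_sym[of G V] by simp
  finally show ?thesis by (simp add: trace_pairing_def)
qed

lemma trace_axis_mult: "trace (axis i (axis j v) ** (G::complex^'r^'r)) = v * G $ j $ i"
proof -
  have "(\<Sum>k\<in>UNIV. axis i (axis j v) $ a $ k * G $ k $ a) = (if a = i then v * G $ j $ i else 0)"
    for a
  proof -
    have "(\<Sum>k\<in>UNIV. axis i (axis j v) $ a $ k * G $ k $ a)
        = (\<Sum>k\<in>UNIV. if a = i \<and> k = j then v * G $ j $ a else 0)"
      by (intro sum.cong) (auto simp: axis_def)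
    then show ?thesis by (auto simp: sum.If_cases)
  qed
  then show ?thesis unfolding trace_def matrix_matrix_mult_def by simp
qed

lemma linear_eq_trace_pairing:
  fixes D :: "complex^'r^'r \<Rightarrow> real"
  assumes "linear D"
  shows "\<exists>G. trace_pairing G = D"
proof
  define G :: "complex^'r^'r" where
    "G = (\<chi> j i. Complex (D (axis i (axis j 1))) (- D (axis i (axis j \<i>))))"
  show "trace_pairing G = D"
  proof (rule linear_eq_stdbasis[OF linear_trace_pairing assms])
    fix b :: "complex^'r^'r" assume "b \<in> Basis"
    then obtain i j v where b: "b = axis i (axis j v)" and "v = 1 \<or> v = \<i>"
      by (auto simp: Basis_vec_def Basis_complex_def)
    then show "trace_pairing G b = D b"
      by (auto simp: trace_pairing_def trace_axis_mult G_def)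
  qed
qed

lemma has_derivative_within_hermitian_cong:
  assumes der: "(g has_derivative D) (at W0 within hermitian_set)" and "hermitian W0"
    and "bounded_linear D'" and eq: "\<And>V. hermitian V \<Longrightarrow> D' V = D V"
  shows "(g has_derivative D') (at W0 within hermitian_set)"
  unfolding has_derivative_within
proof
  show "bounded_linear D'" by fact
  have lim: "((\<lambda>W. (1 / norm (W - W0)) *\<^sub>R (g W - (g W0 + D (W - W0)))) \<longlongrightarrow> 0)
      (at W0 within hermitian_set)"
    using der unfolding has_derivative_within by blast
  have ev: "\<forall>\<^sub>F W in at W0 within hermitian_set.
      (1 / norm (W - W0)) *\<^sub>R (g W - (g W0 + D (W - W0)))
      = (1 / norm (W - W0)) *\<^sub>R (g W - (g W0 + D' (W - W0)))"
    unfolding eventually_at_filter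
    by (rule always_eventually) (auto simp: eq hermitian_diff \<open>hermitian W0\<close>)
  show "((\<lambda>W. (1 / norm (W - W0)) *\<^sub>R (g W - (g W0 + D' (W - W0)))) \<longlongrightarrow> 0)
      (at W0 within hermitian_set)"
    using tendsto_cong[OF ev] lim by simp
qed

text \<open>Only derivatives along Hermitian directions are determined by \<open>g\<close>, so any representing
  matrix \<open>G\<close> may be replaced by its Hermitian part \<open>(G + G\<^sup>H)/2\<close>.\<close>
lemma hermitian_gradient_exists:
  assumes der: "(g has_derivative D) (at W0 within hermitian_set)" and W0: "hermitian W0"
  shows "\<exists>G. hermitian G \<and> (g has_derivative trace_pairing G) (at W0 within hermitian_set)"
proof -
  obtain G0 where G0: "trace_pairing G0 = D"
    using linear_eq_trace_pairing has_derivative_linear[OF der] by blast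
  define G where "G = (1/2) *\<^sub>R (G0 + cadj G0)"
  have "hermitian G" by (simp add: G_def hermitian_def cadj_scaleR cadj_add add.commute)
  moreover have "trace_pairing G V = D V" if "hermitian V" for V
    using trace_pairing_cadj[OF that, of G0] G0
    by (simp add: G_def trace_pairing_scaleR_left trace_pairing_add_left)
  ultimately show ?thesis
    using has_derivative_within_hermitian_cong[OF der W0 bounded_linear_trace_pairing] by blast
qed

lemma herm_grad_spec:
  assumes g: "class_G g" and W0: "hermitian W0"
  shows "hermitian (herm_grad g W0)"
    and "(g has_derivative trace_pairing (herm_grad g W0)) (at W0 within hermitian_set)"
proof -
  have "g differentiable (at W0 within hermitian_set)" using g W0 by (simp add: class_G_def)
  then obtain D where "(g has_derivative D) (at W0 within hermitian_set)"
    by (auto simp: differentiable_def)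
  from hermitian_gradient_exists[OF this W0]
  have "\<exists>G. hermitian G \<and> (g has_derivative (\<lambda>V. Re (trace (V ** G)))) (at W0 within hermitian_set)"
    by (simp add: trace_pairing_def[abs_def])
  from someI_ex[OF this] show "hermitian (herm_grad g W0)"
      "(g has_derivative trace_pairing (herm_grad g W0)) (at W0 within hermitian_set)"
    unfolding herm_grad_def trace_pairing_def[abs_def] by auto
qed

lemma has_real_derivative_nonneg_at_left_min:
  assumes der: "(f has_real_derivative d) (at 0 within {0..1})"
    and min: "\<And>t. 0 < t \<Longrightarrow> t \<le> 1 \<Longrightarrow> f 0 \<le> f t"
  shows "0 \<le> d"
proof (rule ccontr)
  assume "\<not> 0 \<le> d"
  then obtain e where "e > 0" and e: "\<forall>h>0. 0 + h \<in> {0..1} \<longrightarrow> h < e \<longrightarrow> f 0 > f (0 + h)"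
    using has_real_derivative_neg_dec_right[OF der] by force
  then have "f (min (e / 2) 1) < f 0" by simp
  with min[of "min (e / 2) 1"] \<open>e > 0\<close> show False by simp
qed

lemma has_real_derivative_along_line:
  fixes g :: "complex^'r^'r \<Rightarrow> real"
  assumes der: "(g has_derivative D) (at W0 within hermitian_set)"
    and "hermitian W0" and "hermitian V"
  shows "((\<lambda>t. g (W0 + t *\<^sub>R V)) has_real_derivative D V) (at 0 within S)"
proof -
  have "(\<lambda>t::real. W0 + t *\<^sub>R V) ` S \<subseteq> hermitian_set"
    using assms by (auto simp: hermitian_add hermitian_scaleR)
  then have "(g has_derivative D) (at ((\<lambda>t::real. W0 + t *\<^sub>R V) 0) within (\<lambda>t. W0 + t *\<^sub>R V) ` S)"
    using has_derivative_subset[OF der] by simp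
  moreover have "((\<lambda>t::real. W0 + t *\<^sub>R V) has_derivative (\<lambda>t. t *\<^sub>R V)) (at 0 within S)"
    by (auto intro!: derivative_eq_intros)
  ultimately have "((g \<circ> (\<lambda>t. W0 + t *\<^sub>R V)) has_derivative (D \<circ> (\<lambda>t. t *\<^sub>R V))) (at 0 within S)"
    by (rule diff_chain_within[rotated])
  moreover have "D \<circ> (\<lambda>t. t *\<^sub>R V) = (*) (D V)"
    using has_derivative_bounded_linear[OF der] by (auto simp: fun_eq_iff linear_simps(5))
  ultimately show ?thesis by (simp add: has_field_derivative_def comp_def)
qed

lemma convex_on_hermitian_tangent_le:
  fixes g :: "complex^'r^'r \<Rightarrow> real"
  assumes cvx: "convex_on hermitian_set g" and W0: "hermitian W0" and W: "hermitian W"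
    and der: "(g has_derivative D) (at W0 within hermitian_set)"
  shows "g W0 + D (W - W0) \<le> g W"
proof -
  define \<psi> where "\<psi> t = (1 - t) * g W0 + t * g W - g (W0 + t *\<^sub>R (W - W0))" for t
  have "(\<psi> has_real_derivative g W - g W0 - D (W - W0)) (at 0 within {0..1})"
    unfolding \<psi>_def using has_real_derivative_along_line[OF der W0 hermitian_diff[OF W W0]]
    by (auto intro!: derivative_eq_intros)
  moreover have "\<psi> 0 \<le> \<psi> t" if "0 < t" "t \<le> 1" for t
  proof -
    have "W0 + t *\<^sub>R (W - W0) = (1 - t) *\<^sub>R W0 + t *\<^sub>R W" by (simp add: algebra_simps)
    then show ?thesis using convex_onD[OF cvx, of t W0 W] that W0 W by (simp add: \<psi>_def)
  qed
  ultimately have "0 \<le> g W - g W0 - D (W - W0)" by (rule has_real_derivative_nonneg_at_left_min)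
  then show ?thesis by simp
qed

lemma has_derivative_nonneg_at_ray_min:
  fixes g :: "complex^'r^'r \<Rightarrow> real"
  assumes der: "(g has_derivative D) (at W0 within hermitian_set)"
    and "hermitian W0" and "hermitian V" and min: "\<And>t. 0 \<le> t \<Longrightarrow> g W0 \<le> g (W0 + t *\<^sub>R V)"
  shows "0 \<le> D V"
  using has_real_derivative_nonneg_at_left_min[OF has_real_derivative_along_line[OF assms(1-3)]] min
  by simp

section \<open>Partial linearisation of a quadratic matrix function\<close>

text \<open>The quadratic map \<open>X\<^sup>H (B + C) X\<close> with its \<open>C\<close>-part linearised at \<open>X\<^sub>0\<close>. Both
  \<open>lin_L\<close> and the argument of \<open>g\<close> in \<open>upper_bnd\<close> have this form, with \<open>{B, C}\<close> the
  positive and negative parts of \<open>A\<close>.\<close>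
definition partial_lin :: "complex^'n^'n \<Rightarrow> complex^'n^'n \<Rightarrow> complex^'r^'n \<Rightarrow> complex^'r^'n
    \<Rightarrow> complex^'r^'r" where
  "partial_lin B C X0 X =
     cadj X ** B ** X + cadj X ** C ** X0 + cadj X0 ** C ** X - cadj X0 ** C ** X0"

lemmas matrix_distribs = matrix_add_ldistrib matrix_add_rdistrib matrix_diff_ldistrib
  matrix_diff_rdistrib cadj_add cadj_diff cadj_scaleR scalar_matrix_assoc[symmetric]
  matrix_scalar_ac

lemma partial_lin_self: "partial_lin B C X0 X0 = cadj X0 ** (B + C) ** X0"
  unfolding partial_lin_def by (simp add: matrix_distribs)

lemma quadratic_minus_partial_lin:
  "cadj X ** (B + C) ** X - partial_lin B C X0 X = cadj (X - X0) ** C ** (X - X0)"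
  unfolding partial_lin_def by (simp add: matrix_distribs algebra_simps)

lemma partial_lin_add_scaleR:
  "partial_lin B C X0 (Y + s *\<^sub>R D) = partial_lin B C X0 Y
     + s *\<^sub>R (cadj D ** B ** Y + cadj Y ** B ** D + cadj D ** C ** X0 + cadj X0 ** C ** D)
     + (s * s) *\<^sub>R (cadj D ** B ** D)"
  unfolding partial_lin_def by (simp add: matrix_distribs algebra_simps)

lemma partial_lin_convex_comb:
  assumes "u + v = 1"
  shows "partial_lin B C X0 (u *\<^sub>R X + v *\<^sub>R Y)
    = u *\<^sub>R partial_lin B C X0 X + v *\<^sub>R partial_lin B C X0 Y
      - (u * v) *\<^sub>R (cadj (X - Y) ** B ** (X - Y))"
proof -
  have v: "v = 1 - u" using assms by simp
  have "u *\<^sub>R X + v *\<^sub>R Y = Y + u *\<^sub>R (X - Y)" by (simp add: v algebra_simps)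
  moreover have "X = Y + 1 *\<^sub>R (X - Y)" by simp
  ultimately show ?thesis
    using partial_lin_add_scaleR[of B C X0 Y u "X - Y"]
      partial_lin_add_scaleR[of B C X0 Y 1 "X - Y"]
    by (simp add: v algebra_simps)
qed

lemma hermitian_partial_lin:
  assumes "hermitian B" and "hermitian C"
  shows "hermitian (partial_lin B C X0 X)"
proof -
  have "partial_lin B C X0 X
      = cadj X ** B ** X + (cadj X ** C ** X0 + cadj X0 ** C ** X) - cadj X0 ** C ** X0"
    by (simp add: partial_lin_def add.assoc)
  then show ?thesis using assms
    by (simp add: hermitian_add hermitian_diff hermitian_congruence hermitian_congruence_sym)
qed

lemma bounded_bilinear_sesquilinear_form:
  "bounded_bilinear (\<lambda>(X::complex^'r^'n) (Y::complex^'r^'n). cadj X ** B ** Y)"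
proof -
  have "bilinear (\<lambda>(X::complex^'r^'n) (Y::complex^'r^'n). cadj X ** B ** Y)"
    unfolding bilinear_def
  proof (intro conjI allI)
    fix X :: "complex^'r^'n"
    show "linear (\<lambda>Y. cadj X ** B ** Y)"
      by (rule linearI)
        (simp_all add: matrix_add_ldistrib matrix_scalar_ac scalar_matrix_assoc[symmetric])
  next
    fix Y :: "complex^'r^'n"
    show "linear (\<lambda>X. cadj X ** B ** Y)"
      by (rule linearI)
        (simp_all add: cadj_add cadj_scaleR matrix_add_rdistrib scalar_matrix_assoc[symmetric])
  qed
  then show ?thesis using bilinear_conv_bounded_bilinear by blast
qed

lemma has_derivative_quadratic_form:
  "((\<lambda>X. cadj X ** A ** X) has_derivative (\<lambda>H. cadj X0 ** A ** H + cadj H ** A ** X0)) (at X0)"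
  using bounded_bilinear.FDERIV[OF bounded_bilinear_sesquilinear_form[of A]
      has_derivative_ident has_derivative_ident, of X0 UNIV]
  by simp

lemma has_derivative_partial_lin:
  "(partial_lin B C X0 has_derivative
      (\<lambda>H. cadj X0 ** (B + C) ** H + cadj H ** (B + C) ** X0)) (at X0)"
proof -
  note bl = bounded_bilinear_sesquilinear_form[of C]
  have "((\<lambda>X. cadj X ** B ** X + cadj X ** C ** X0 + cadj X0 ** C ** X - cadj X0 ** C ** X0)
      has_derivative (\<lambda>H. (cadj X0 ** B ** H + cadj H ** B ** X0) + cadj H ** C ** X0
        + cadj X0 ** C ** H - 0)) (at X0)"
    by (intro has_derivative_add has_derivative_diff has_derivative_quadratic_form
        has_derivative_const bounded_linear_imp_has_derivative
        bounded_bilinear.bounded_linear_left[OF bl] bounded_bilinear.bounded_linear_right[OF bl])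
  then show ?thesis
    unfolding partial_lin_def[abs_def]
    by (simp add: matrix_add_ldistrib matrix_add_rdistrib ac_simps)
qed

section \<open>Tight concave minorants\<close>

definition tight_concave_minorant :: "('a::real_normed_vector \<Rightarrow> real) \<Rightarrow> ('a \<Rightarrow> real) \<Rightarrow> 'a \<Rightarrow> bool"
  where "tight_concave_minorant m f x0 \<longleftrightarrow> concave_on UNIV m \<and> (\<forall>x. m x \<le> f x) \<and> m x0 = f x0
    \<and> (\<exists>D. (f has_derivative D) (at x0) \<and> (m has_derivative D) (at x0))"

lemma tight_concave_minorant_zero: "tight_concave_minorant (\<lambda>x. 0) (\<lambda>x. 0) x0"
  unfolding tight_concave_minorant_def by (auto simp: concave_on_const intro!: exI[of _ "\<lambda>x. 0"])

lemma tight_concave_minorant_add: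
  assumes "tight_concave_minorant m f x0" and "tight_concave_minorant m' f' x0"
  shows "tight_concave_minorant (\<lambda>x. m x + m' x) (\<lambda>x. f x + f' x) x0"
proof -
  obtain D D' where "(f has_derivative D) (at x0)" "(m has_derivative D) (at x0)"
    "(f' has_derivative D') (at x0)" "(m' has_derivative D') (at x0)"
    using assms by (auto simp: tight_concave_minorant_def)
  then have "((\<lambda>x. f x + f' x) has_derivative (\<lambda>h. D h + D' h)) (at x0)"
    "((\<lambda>x. m x + m' x) has_derivative (\<lambda>h. D h + D' h)) (at x0)"
    by (auto intro: has_derivative_add)
  with assms show ?thesis
    by (auto simp: tight_concave_minorant_def intro: concave_on_add add_mono)
qed

lemma tight_concave_minorant_sum:
  assumes "finite I" and "\<And>i. i \<in> I \<Longrightarrow> tight_concave_minorant (m i) (f i) x0"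
  shows "tight_concave_minorant (\<lambda>x. \<Sum>i\<in>I. m i x) (\<lambda>x. \<Sum>i\<in>I. f i x) x0"
  using assms
  by (induction I rule: finite_induct)
    (auto intro: tight_concave_minorant_zero tight_concave_minorant_add)

lemma tight_concave_minorant_cmul:
  assumes "0 \<le> c" and "tight_concave_minorant m f x0"
  shows "tight_concave_minorant (\<lambda>x. c * m x) (\<lambda>x. c * f x) x0"
proof -
  obtain D where "(f has_derivative D) (at x0)" "(m has_derivative D) (at x0)"
    using assms by (auto simp: tight_concave_minorant_def)
  then have "((\<lambda>x. c * f x) has_derivative (\<lambda>h. c * D h)) (at x0)"
    "((\<lambda>x. c * m x) has_derivative (\<lambda>h. c * D h)) (at x0)"
    by (auto intro: has_derivative_mult_right)
  with assms show ?thesis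
    by (auto simp: tight_concave_minorant_def intro: concave_on_cmul mult_left_mono)
qed

lemma has_derivative_compose_hermitian:
  assumes "(g has_derivative Dg) (at (h x0) within hermitian_set)"
    and "(h has_derivative Dh) (at x0)" and "\<And>x. hermitian (h x)"
  shows "((\<lambda>x. g (h x)) has_derivative (\<lambda>v. Dg (Dh v))) (at x0)"
proof -
  have "range h \<subseteq> hermitian_set" using assms(3) by auto
  then have "(g has_derivative Dg) (at (h x0) within range h)"
    by (rule has_derivative_subset[OF assms(1)])
  from diff_chain_within[OF assms(2) this] show ?thesis by (simp add: comp_def)
qed

lemma concave_on_trace_pairing_partial_lin:
  fixes B C :: "complex^'n^'n" and X0 :: "complex^'r^'n"
  assumes "\<And>D::complex^'r^'n. trace_pairing G (cadj D ** B ** D) \<le> 0"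
  shows "concave_on UNIV (\<lambda>X. trace_pairing G (partial_lin B C X0 X))"
  unfolding concave_on_def convex_on_def
proof (intro conjI convex_UNIV ballI allI impI)
  fix X Y :: "complex^'r^'n" and u v :: real
  assume "0 \<le> u" "0 \<le> v" "u + v = 1"
  then have "0 \<le> (u * v) * - trace_pairing G (cadj (X - Y) ** B ** (X - Y))"
    using assms[of "X - Y"] by (simp add: mult_nonneg_nonpos)
  then show "- trace_pairing G (partial_lin B C X0 (u *\<^sub>R X + v *\<^sub>R Y))
      \<le> u * - trace_pairing G (partial_lin B C X0 X) + v * - trace_pairing G (partial_lin B C X0 Y)"
    unfolding partial_lin_convex_comb[OF \<open>u + v = 1\<close>]
    by (simp add: trace_pairing_add trace_pairing_diff trace_pairing_scaleR)
qed

section \<open>The bounds for a single term\<close>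

text \<open>The only consequences of monotonicity the bounds use. For MND \<open>g\<close> the split is
  \<open>(E, F) = (A\<^sup>+, A\<^sup>-)\<close>, for MNI \<open>g\<close> the reverse.\<close>
locale loewner_split =
  fixes g :: "complex^'r^'r \<Rightarrow> real" and E F :: "complex^'n^'n"
  assumes convex: "convex_on hermitian_set g"
    and hermitian_E: "hermitian E" and hermitian_F: "hermitian F"
    and descent: "\<And>W (D::complex^'r^'n) t. hermitian W \<Longrightarrow> 0 \<le> t
      \<Longrightarrow> g (W - t *\<^sub>R (cadj D ** E ** D)) \<le> g W"
    and ascent: "\<And>W (D::complex^'r^'n) t. hermitian W \<Longrightarrow> 0 \<le> t
      \<Longrightarrow> g W \<le> g (W - t *\<^sub>R (cadj D ** F ** D))"
begin

lemma hermitian_quadratic: "hermitian (cadj X ** (E + F) ** X)"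
  by (simp add: hermitian_congruence hermitian_add hermitian_E hermitian_F)

lemma g_partial_lin_le_quadratic: "g (partial_lin F E X0 X) \<le> g (cadj X ** (E + F) ** X)"
proof -
  have "partial_lin F E X0 X = cadj X ** (E + F) ** X - 1 *\<^sub>R (cadj (X - X0) ** E ** (X - X0))"
    using quadratic_minus_partial_lin[of X F E X0] by (simp add: add.commute algebra_simps)
  then show ?thesis using descent[OF hermitian_quadratic, where D = "X - X0" and t = 1] by simp
qed

lemma g_quadratic_le_partial_lin: "g (cadj X ** (E + F) ** X) \<le> g (partial_lin E F X0 X)"
proof -
  have "partial_lin E F X0 X = cadj X ** (E + F) ** X - 1 *\<^sub>R (cadj (X - X0) ** F ** (X - X0))"
    using quadratic_minus_partial_lin[of X E F X0] by (simp add: algebra_simps)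
  then show ?thesis using ascent[OF hermitian_quadratic, where D = "X - X0" and t = 1] by simp
qed

lemma convex_on_g_partial_lin: "convex_on UNIV (\<lambda>X. g (partial_lin E F X0 X))"
proof (rule convex_onI[OF _ convex_UNIV])
  fix t :: real and X Y :: "complex^'r^'n"
  assume t: "0 < t" "t < 1"
  have herm_L: "hermitian (partial_lin E F X0 Z)" for Z
    by (simp add: hermitian_partial_lin hermitian_E hermitian_F)
  let ?M = "(1 - t) *\<^sub>R partial_lin E F X0 X + t *\<^sub>R partial_lin E F X0 Y"
  have "partial_lin E F X0 ((1 - t) *\<^sub>R X + t *\<^sub>R Y)
      = ?M - ((1 - t) * t) *\<^sub>R (cadj (X - Y) ** E ** (X - Y))"
    by (rule partial_lin_convex_comb) simp
  moreover have "hermitian ?M" by (simp add: hermitian_add hermitian_scaleR herm_L)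
  ultimately have "g (partial_lin E F X0 ((1 - t) *\<^sub>R X + t *\<^sub>R Y)) \<le> g ?M"
    using descent t by simp
  also have "\<dots> \<le> (1 - t) * g (partial_lin E F X0 X) + t * g (partial_lin E F X0 Y)"
    using convex_onD[OF convex, of t] t herm_L by simp
  finally show "g (partial_lin E F X0 ((1 - t) *\<^sub>R X + t *\<^sub>R Y))
      \<le> (1 - t) * g (partial_lin E F X0 X) + t * g (partial_lin E F X0 Y)" .
qed

text \<open>Since \<open>g\<close> is minimal at \<open>W\<^sub>0\<close> along the ray \<open>W\<^sub>0 - t D\<^sup>H F D\<close>, \<open>t \<ge> 0\<close>.\<close>
lemma trace_pairing_gradient_congruence_nonpos:
  assumes grad: "(g has_derivative trace_pairing G) (at W0 within hermitian_set)"
    and W0: "hermitian W0"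
  shows "trace_pairing G (cadj D ** F ** D) \<le> 0"
proof -
  have "hermitian (- (cadj D ** F ** D))"
    using hermitian_scaleR[OF hermitian_congruence[OF hermitian_F, of D], where c="- 1"] by simp
  then have "0 \<le> trace_pairing G (- (cadj D ** F ** D))"
    by (rule has_derivative_nonneg_at_ray_min[OF grad W0]) (use ascent[OF W0] in simp)
  then show ?thesis by (simp add: trace_pairing_uminus)
qed

lemma tight_lower:
  assumes W0: "W0 = cadj X0 ** (E + F) ** X0"
    and grad: "(g has_derivative trace_pairing G) (at W0 within hermitian_set)"
  shows "tight_concave_minorant
    (\<lambda>X. trace_pairing G (partial_lin F E X0 X) + g W0 - trace_pairing G W0)
    (\<lambda>X. g (cadj X ** (E + F) ** X)) X0"
  unfolding tight_concave_minorant_def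
proof (intro conjI exI allI)
  have herm_W0: "hermitian W0" using W0 hermitian_quadratic by simp
  show "concave_on UNIV (\<lambda>X. trace_pairing G (partial_lin F E X0 X) + g W0 - trace_pairing G W0)"
    using trace_pairing_gradient_congruence_nonpos[OF grad herm_W0]
    by (intro concave_on_diff concave_on_add concave_on_trace_pairing_partial_lin)
      (auto simp: concave_on_const convex_on_const)
  fix X :: "complex^'r^'n"
  have "g W0 + trace_pairing G (partial_lin F E X0 X - W0) \<le> g (partial_lin F E X0 X)"
    by (rule convex_on_hermitian_tangent_le[OF convex herm_W0 _ grad])
      (simp add: hermitian_partial_lin hermitian_E hermitian_F)
  also have "\<dots> \<le> g (cadj X ** (E + F) ** X)" by (rule g_partial_lin_le_quadratic)
  finally show "trace_pairing G (partial_lin F E X0 X) + g W0 - trace_pairing G W0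
      \<le> g (cadj X ** (E + F) ** X)"
    by (simp add: trace_pairing_diff)
  show "trace_pairing G (partial_lin F E X0 X0) + g W0 - trace_pairing G W0
      = g (cadj X0 ** (E + F) ** X0)"
    by (simp add: partial_lin_self W0 add.commute)
  let ?D = "\<lambda>H. trace_pairing G (cadj X0 ** (E + F) ** H + cadj H ** (E + F) ** X0)"
  show "((\<lambda>X. g (cadj X ** (E + F) ** X)) has_derivative ?D) (at X0)"
    using has_derivative_compose_hermitian[OF _ has_derivative_quadratic_form hermitian_quadratic]
      grad W0 by simp
  show "((\<lambda>X. trace_pairing G (partial_lin F E X0 X) + g W0 - trace_pairing G W0)
      has_derivative ?D) (at X0)"
    using bounded_linear.has_derivative[OF bounded_linear_trace_pairing has_derivative_partial_lin,
        of G F E X0]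
    by (auto intro!: derivative_eq_intros simp: add.commute)
qed

lemma tight_upper:
  assumes W0: "W0 = cadj X0 ** (E + F) ** X0"
    and grad: "(g has_derivative Dg) (at W0 within hermitian_set)"
  shows "tight_concave_minorant (\<lambda>X. - g (partial_lin E F X0 X))
    (\<lambda>X. - g (cadj X ** (E + F) ** X)) X0"
  unfolding tight_concave_minorant_def
proof (intro conjI exI allI)
  show "concave_on UNIV (\<lambda>X. - g (partial_lin E F X0 X))"
    using convex_on_g_partial_lin by (simp add: convex_on_iff_concave)
  show "- g (partial_lin E F X0 X) \<le> - g (cadj X ** (E + F) ** X)" for X
    using g_quadratic_le_partial_lin by simp
  show "- g (partial_lin E F X0 X0) = - g (cadj X0 ** (E + F) ** X0)"
    by (simp add: partial_lin_self)
  have herm_L: "hermitian (partial_lin E F X0 X)" for X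
    by (simp add: hermitian_partial_lin hermitian_E hermitian_F)
  let ?D = "\<lambda>H. - Dg (cadj X0 ** (E + F) ** H + cadj H ** (E + F) ** X0)"
  show "((\<lambda>X. - g (cadj X ** (E + F) ** X)) has_derivative ?D) (at X0)"
    using has_derivative_compose_hermitian[OF _ has_derivative_quadratic_form hermitian_quadratic]
      grad W0 by (auto intro: has_derivative_minus)
  show "((\<lambda>X. - g (partial_lin E F X0 X)) has_derivative ?D) (at X0)"
    using has_derivative_compose_hermitian[OF _ has_derivative_partial_lin herm_L]
      grad W0 by (auto simp: partial_lin_self intro: has_derivative_minus)
qed

end

lemma loewner_ge_diff_pos_part:
  fixes A :: "complex^'n^'n" and D :: "complex^'r^'n"
  assumes "hermitian A" and "hermitian W" and "0 \<le> t"
  shows "hermitian (W - t *\<^sub>R (cadj D ** pos_part A ** D))"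
    and "loewner_ge W (W - t *\<^sub>R (cadj D ** pos_part A ** D))"
proof -
  have "psd (t *\<^sub>R (cadj D ** pos_part A ** D))"
    using psd_scaleR[OF assms(3) psd_congruence[OF psd_pos_part[OF assms(1)]]] .
  then show "hermitian (W - t *\<^sub>R (cadj D ** pos_part A ** D))"
    and "loewner_ge W (W - t *\<^sub>R (cadj D ** pos_part A ** D))"
    using assms(2) by (simp_all add: loewner_ge_def psd_def hermitian_diff)
qed

lemma loewner_ge_diff_neg_part:
  fixes A :: "complex^'n^'n" and D :: "complex^'r^'n"
  assumes "hermitian A" and "hermitian W" and "0 \<le> t"
  shows "hermitian (W - t *\<^sub>R (cadj D ** neg_part A ** D))"
    and "loewner_ge (W - t *\<^sub>R (cadj D ** neg_part A ** D)) W"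
proof -
  have "psd (t *\<^sub>R - (cadj D ** neg_part A ** D))"
    using psd_scaleR[OF assms(3) psd_uminus_congruence[OF psd_uminus_neg_part[OF assms(1)]]] .
  then show "hermitian (W - t *\<^sub>R (cadj D ** neg_part A ** D))"
    and "loewner_ge (W - t *\<^sub>R (cadj D ** neg_part A ** D)) W"
    using assms(2) by (simp_all add: loewner_ge_def psd_def hermitian_diff hermitian_scaleR
        hermitian_congruence hermitian_neg_part assms(1))
qed

lemma MND_D: "MND g \<Longrightarrow> hermitian W1 \<Longrightarrow> hermitian W2 \<Longrightarrow> loewner_ge W1 W2 \<Longrightarrow> g W2 \<le> g W1"
  by (simp add: MND_def)

lemma MNI_D: "MNI g \<Longrightarrow> hermitian W1 \<Longrightarrow> hermitian W2 \<Longrightarrow> loewner_ge W1 W2 \<Longrightarrow> g W1 \<le> g W2"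
  by (simp add: MNI_def)

lemma loewner_split_MND:
  fixes g :: "complex^'r^'r \<Rightarrow> real" and A :: "complex^'n^'n"
  assumes "class_G g" and "MND g" and "hermitian A"
  shows "loewner_split g (pos_part A) (neg_part A)"
proof
  show "convex_on hermitian_set g" using assms(1) by (simp add: class_G_def)
  show "hermitian (pos_part A)" "hermitian (neg_part A)"
    using assms(3) by (simp_all add: hermitian_pos_part hermitian_neg_part)
  fix W :: "complex^'r^'r" and D :: "complex^'r^'n" and t :: real
  assume W: "hermitian W" and t: "0 \<le> t"
  show "g (W - t *\<^sub>R (cadj D ** pos_part A ** D)) \<le> g W"
    using MND_D[OF assms(2) W] loewner_ge_diff_pos_part[OF assms(3) W t] .
  show "g W \<le> g (W - t *\<^sub>R (cadj D ** neg_part A ** D))"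
    using MND_D[OF assms(2) _ W] loewner_ge_diff_neg_part[OF assms(3) W t] .
qed

lemma loewner_split_MNI:
  fixes g :: "complex^'r^'r \<Rightarrow> real" and A :: "complex^'n^'n"
  assumes "class_G g" and "MNI g" and "hermitian A"
  shows "loewner_split g (neg_part A) (pos_part A)"
proof
  show "convex_on hermitian_set g" using assms(1) by (simp add: class_G_def)
  show "hermitian (pos_part A)" "hermitian (neg_part A)"
    using assms(3) by (simp_all add: hermitian_pos_part hermitian_neg_part)
  fix W :: "complex^'r^'r" and D :: "complex^'r^'n" and t :: real
  assume W: "hermitian W" and t: "0 \<le> t"
  show "g (W - t *\<^sub>R (cadj D ** neg_part A ** D)) \<le> g W"
    using MNI_D[OF assms(2) _ W] loewner_ge_diff_neg_part[OF assms(3) W t] .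
  show "g W \<le> g (W - t *\<^sub>R (cadj D ** pos_part A ** D))"
    using MNI_D[OF assms(2) W] loewner_ge_diff_pos_part[OF assms(3) W t] .
qed

lemma exists_loewner_split:
  fixes g :: "complex^'r^'r \<Rightarrow> real" and A :: "complex^'n^'n" and X0 :: "complex^'r^'n"
  assumes "class_G g" and "hermitian A"
  shows "\<exists>E F. loewner_split g E F \<and> E + F = A \<and> lin_L g A X0 = partial_lin F E X0
    \<and> upper_bnd g A X0 = (\<lambda>X. g (partial_lin E F X0 X))"
proof (cases "MND g")
  case True
  then show ?thesis
    using loewner_split_MND[OF assms(1) True assms(2)] pos_part_add_neg_part[OF assms(2)]
    by (intro exI[of _ "pos_part A"] exI[of _ "neg_part A"])
      (simp add: fun_eq_iff lin_L_def upper_bnd_def partial_lin_def)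
next
  case False
  then have "MNI g" using assms(1) by (simp add: class_G_def)
  then show ?thesis
    using False loewner_split_MNI[OF assms(1) _ assms(2)] pos_part_add_neg_part[OF assms(2)]
    by (intro exI[of _ "neg_part A"] exI[of _ "pos_part A"])
      (simp add: fun_eq_iff lin_L_def upper_bnd_def partial_lin_def add.commute)
qed

lemma tight_lower_bnd:
  assumes "class_G g" and "hermitian A"
  shows "tight_concave_minorant (lower_bnd g A X0) (\<lambda>X. g (cadj X ** A ** X)) X0"
proof -
  obtain E F where split: "loewner_split g E F" and EF: "E + F = A"
    and L: "lin_L g A X0 = partial_lin F E X0"
    using exists_loewner_split[OF assms] by blast
  define W0 where "W0 = cadj X0 ** A ** X0"
  define G where "G = herm_grad g W0"
  have grad: "(g has_derivative trace_pairing G) (at W0 within hermitian_set)"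
    using herm_grad_spec(2)[OF assms(1) hermitian_congruence[OF assms(2)]]
    by (simp add: G_def W0_def)
  have "lower_bnd g A X0 = (\<lambda>X. trace_pairing G (partial_lin F E X0 X) + g W0 - trace_pairing G W0)"
    by (simp add: fun_eq_iff lower_bnd_def Let_def trace_pairing_def L W0_def G_def)
  then show ?thesis using loewner_split.tight_lower[OF split _ grad] EF W0_def by simp
qed

lemma tight_upper_bnd:
  assumes "class_G g" and "hermitian A"
  shows "tight_concave_minorant (\<lambda>X. - upper_bnd g A X0 X) (\<lambda>X. - g (cadj X ** A ** X)) X0"
proof -
  obtain E F where split: "loewner_split g E F" and EF: "E + F = A"
    and U: "upper_bnd g A X0 = (\<lambda>X. g (partial_lin E F X0 X))"
    using exists_loewner_split[OF assms] by blast
  have "(g has_derivative trace_pairing (herm_grad g (cadj X0 ** A ** X0)))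
      (at (cadj X0 ** A ** X0) within hermitian_set)"
    using herm_grad_spec(2)[OF assms(1) hermitian_congruence[OF assms(2)]] .
  then show ?thesis using loewner_split.tight_upper[OF split _ , of _ X0] EF U by simp
qed

section \<open>The minorant of a generalized quadratic matrix function\<close>

lemma sum_split_sign:
  fixes \<alpha> :: "'a \<Rightarrow> real" and p n :: "'a \<Rightarrow> 'b::comm_monoid_add"
  assumes "finite I"
  shows "(\<Sum>k\<in>{k\<in>I. \<alpha> k > 0}. p k) + (\<Sum>k\<in>{k\<in>I. \<alpha> k < 0}. n k)
    = (\<Sum>k\<in>I. if \<alpha> k > 0 then p k else if \<alpha> k < 0 then n k else 0)"
proof -
  have "(\<Sum>k\<in>I. if \<alpha> k > 0 then p k else if \<alpha> k < 0 then n k else 0)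
      = (\<Sum>k\<in>I. (if \<alpha> k > 0 then p k else 0) + (if \<alpha> k < 0 then n k else 0))"
    by (rule sum.cong) auto
  then show ?thesis using assms by (simp add: sum.distrib sum.inter_filter)
qed

theorem mainTheorem3:
  fixes K :: nat and \<alpha> :: "nat \<Rightarrow> real"
    and g :: "nat \<Rightarrow> complex^'r^'r \<Rightarrow> real"
    and A :: "nat \<Rightarrow> complex^'n^'n"
    and X0 :: "complex^'r^'n"
  assumes "\<forall>k\<in>{1..K}. hermitian (A k)"
    and "\<forall>k\<in>{1..K}. class_G (g k)"
  shows "concave_on UNIV (fbar K \<alpha> g A X0)
    \<and> (\<forall>X. fbar K \<alpha> g A X0 X \<le> gqmf K \<alpha> g A X)
    \<and> fbar K \<alpha> g A X0 X0 = gqmf K \<alpha> g A X0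
    \<and> (\<exists>D. (gqmf K \<alpha> g A has_derivative D) (at X0)
          \<and> (fbar K \<alpha> g A X0 has_derivative D) (at X0))"
proof -
  define m where "m k = (if \<alpha> k > 0 then (\<lambda>X. \<alpha> k * lower_bnd (g k) (A k) X0 X)
    else if \<alpha> k < 0 then (\<lambda>X. \<alpha> k * upper_bnd (g k) (A k) X0 X) else (\<lambda>X. 0))" for k
  have "tight_concave_minorant (m k) (\<lambda>X. \<alpha> k * g k (cadj X ** A k ** X)) X0"
    if k: "k \<in> {1..K}" for k
  proof -
    note lower = tight_lower_bnd[of "g k" "A k" X0] and upper = tight_upper_bnd[of "g k" "A k" X0]
    consider "\<alpha> k > 0" | "\<alpha> k < 0" | "\<alpha> k = 0" by linarith
    then show ?thesis
      using k assms tight_concave_minorant_cmul[OF _ lower, of "\<alpha> k"]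
        tight_concave_minorant_cmul[OF _ upper, of "- \<alpha> k"]
      by cases (simp_all add: m_def tight_concave_minorant_zero)
  qed
  then have "tight_concave_minorant (\<lambda>X. \<Sum>k\<in>{1..K}. m k X) (gqmf K \<alpha> g A) X0"
    unfolding gqmf_def[abs_def] by (rule tight_concave_minorant_sum[OF finite_atLeastAtMost])
  moreover have "fbar K \<alpha> g A X0 = (\<lambda>X. \<Sum>k\<in>{1..K}. m k X)"
    unfolding fbar_def sum_split_sign[OF finite_atLeastAtMost] m_def by (intro ext sum.cong) auto
  ultimately show ?thesis by (simp add: tight_concave_minorant_def)
qed

end
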